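(* For unweighted directed graphs and any threshold $\zeta\ge 1$, there exists an $O(\zeta)$-round deterministic $\mathsf{CONGEST}$ algorithm that lets the first endpoint $v_i$ of each edge $e=(v_i,v_{i+1})$ of $P$ compute the shortest length of a replacement path for $e$ with a short detour (i.e., with a detour of at most $\zeta$ hops).
   Context: $G=(V,E)$ is an unweighted directed graph with $n=|V|$ which is also the communication network (communication over edges in both directions). $\mathsf{CONGEST}$: synchronous rounds, each vertex may send an $O(\log n)$-bit message to each neighbour per round, unique identifiers, unlimited local computation. $P=(s=v_0,v_1,\dots,v_{h_{st}}=t)$ is a given shortest $s$-$t$ path. Initially the endpoints of each edge of $P$ know the edge belongs to $P$, and each vertex $v_i$ of $P$ knows its index $i$, $\mathrm{dist}(s,v_i)$ and $\mathrm{dist}(v_i,t)$. A replacement path for $e=(v_i,v_{i+1})$ of the considered form is an $s$-$t$ path consisting of the subpath of $P$ from $s$ to $v_j$, then a path (the detour) from $v_j$ to $v_l$ sharing no edge with $P$, then the subpath of $P$ from $v_l$ to $t$, where $j\le i$ and $l\ge i+1$. The detour is short if it has at most $\zeta$ edges. The required output is the minimum length over all such replacement paths for $e$ with a short detour ($\infty$ if none exists). *)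

theory Defs
  imports Main "HOL-Library.Extended_Nat"
begin

definition digraph :: "nat set \<Rightarrow> (nat \<times> nat) set \<Rightarrow> bool" where
  "digraph V E \<longleftrightarrow> finite V \<and> E \<subseteq> V \<times> V"

text \<open>A walk is a nonempty vertex list whose consecutive vertices are joined by edges;
  its number of edges (hops) is length minus one.\<close>

definition is_walk :: "(nat \<times> nat) set \<Rightarrow> nat list \<Rightarrow> bool" where
  "is_walk E xs \<longleftrightarrow> xs \<noteq> [] \<and> (\<forall>k < length xs - 1. (xs ! k, xs ! Suc k) \<in> E)"

definition walk_edges :: "nat list \<Rightarrow> (nat \<times> nat) set" where
  "walk_edges xs = {(xs ! k, xs ! Suc k) | k. k < length xs - 1}"

text \<open>Directed hop distance (infinity if unreachable).\<close>

definition dist :: "(nat \<times> nat) set \<Rightarrow> nat \<Rightarrow> nat \<Rightarrow> enat" where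
  "dist E u v = (INF xs \<in> {xs. is_walk E xs \<and> hd xs = u \<and> last xs = v}. enat (length xs - 1))"

text \<open>P = ps is a shortest s-t path with s = hd ps, t = last ps.\<close>

definition shortest_path :: "(nat \<times> nat) set \<Rightarrow> nat list \<Rightarrow> bool" where
  "shortest_path E ps \<longleftrightarrow> is_walk E ps \<and> enat (length ps - 1) = dist E (hd ps) (last ps)"

text \<open>Minimum length of a replacement path for the edge e_i = (ps!i, ps!(i+1)) of P
  consisting of P[s,v_j], a detour D from v_j to v_l (j \<le> i, l \<ge> i+1) that is a
  path sharing no edge with P and has at most zeta edges, and P[v_l,t].
  The infimum of the empty set is \<infinity>.\<close>

definition rp_short :: "(nat \<times> nat) set \<Rightarrow> nat list \<Rightarrow> nat \<Rightarrow> nat \<Rightarrow> enat" where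
  "rp_short E ps \<zeta> i = Inf {enat (j + (length D - 1) + (length ps - 1 - l)) | j l D.
      j \<le> i \<and> i + 1 \<le> l \<and> l < length ps \<and>
      is_walk E D \<and> distinct D \<and> hd D = ps ! j \<and> last D = ps ! l \<and>
      length D - 1 \<le> \<zeta> \<and> walk_edges D \<inter> walk_edges ps = {}}"

text \<open>Initial local knowledge of a node: its identifier, n, the threshold zeta,
  the identifiers of its out- and in-neighbours, which of its incident edges lie on P
  (as the sets of P-out-neighbours and P-in-neighbours), and, if it lies on P,
  its index i on P, dist(s,v_i) and dist(v_i,t).\<close>

datatype local_input = LocalInput
  (li_id: nat) (li_n: nat) (li_zeta: nat)
  (li_out: "nat set") (li_in: "nat set")
  (li_P_out: "nat set") (li_P_in: "nat set")
  (li_index: "nat option") (li_dist_s: "enat option") (li_dist_t: "enat option")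

text \<open>A message is a natural number (None = no message). A node's local view after r
  rounds is its list of received-message functions (sender id \<Rightarrow> message), one per
  round. A deterministic algorithm consists of a sending function (local input, view,
  recipient id \<Rightarrow> message) and an output function; local computation is unlimited
  since these are arbitrary functions.\<close>

type_synonym view = "(nat \<Rightarrow> nat option) list"
type_synonym congest_alg =
  "(local_input \<Rightarrow> view \<Rightarrow> nat \<Rightarrow> nat option) \<times> (local_input \<Rightarrow> view \<Rightarrow> enat)"

text \<open>Communication network: the underlying undirected graph.\<close>

definition nbrs :: "(nat \<times> nat) set \<Rightarrow> nat \<Rightarrow> nat set" where
  "nbrs E v = {u. ((v, u) \<in> E \<or> (u, v) \<in> E) \<and> u \<noteq> v}"

definition node_input :: "nat set \<Rightarrow> (nat \<times> nat) set \<Rightarrow> nat list \<Rightarrow> nat \<Rightarrow> nat \<Rightarrow> local_input" where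
  "node_input V E ps \<zeta> v = LocalInput v (card V) \<zeta>
     {u. (v, u) \<in> E} {u. (u, v) \<in> E}
     {u. (v, u) \<in> walk_edges ps} {u. (u, v) \<in> walk_edges ps}
     (if v \<in> set ps then Some (LEAST i. ps ! i = v) else None)
     (if v \<in> set ps then Some (dist E (hd ps) v) else None)
     (if v \<in> set ps then Some (dist E v (last ps)) else None)"

fun exec_view :: "congest_alg \<Rightarrow> nat set \<Rightarrow> (nat \<times> nat) set \<Rightarrow> nat list \<Rightarrow> nat \<Rightarrow> nat \<Rightarrow> nat \<Rightarrow> view" where
  "exec_view A V E ps \<zeta> 0 = (\<lambda>v. [])"
| "exec_view A V E ps \<zeta> (Suc r) = (\<lambda>v. exec_view A V E ps \<zeta> r v @
     [\<lambda>u. if u \<in> nbrs E v then fst A (node_input V E ps \<zeta> u) (exec_view A V E ps \<zeta> r u) v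
          else None])"

text \<open>Bandwidth constraint: during the first T rounds every message sent over an edge
  has O(log n) bits, i.e. is a number below (n+2)^c.\<close>

definition bandwidth_ok :: "nat \<Rightarrow> congest_alg \<Rightarrow> nat set \<Rightarrow> (nat \<times> nat) set \<Rightarrow> nat list \<Rightarrow> nat \<Rightarrow> nat \<Rightarrow> bool" where
  "bandwidth_ok c A V E ps \<zeta> T \<longleftrightarrow>
     (\<forall>r < T. \<forall>v \<in> V. \<forall>u \<in> nbrs E v.
        (case fst A (node_input V E ps \<zeta> v) (exec_view A V E ps \<zeta> r v) u of
           None \<Rightarrow> True | Some m \<Rightarrow> m < (card V + 2) ^ c))"

definition output_after :: "congest_alg \<Rightarrow> nat set \<Rightarrow> (nat \<times> nat) set \<Rightarrow> nat list \<Rightarrow> nat \<Rightarrow> nat \<Rightarrow> nat \<Rightarrow> enat" where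
  "output_after A V E ps \<zeta> T v = snd A (node_input V E ps \<zeta> v) (exec_view A V E ps \<zeta> T v)"

end

theory Submission
  imports Defs
begin

text \<open>The algorithm runs two phases of \<open>\<zeta>\<close> rounds each. In the first, a breadth-first
  search over the edges off \<open>P\<close> tells every vertex \<open>v\<close>, for each \<open>r \<le> \<zeta>\<close>, the smallest
  index \<open>j\<close> such that an \<open>r\<close>-edge walk avoiding the edges of \<open>P\<close> leads from \<open>v\<^sub>j\<close> to \<open>v\<close>:
  for fixed endpoints only the smallest start matters, and walks can be shortcut to paths.
  Hence \<open>v\<^sub>l\<close> knows, for every threshold \<open>x\<close>, the best length \<open>j + r + dist(v\<^sub>l, t)\<close> of a
  replacement path whose detour ends at \<open>v\<^sub>l\<close> and starts at some \<open>v\<^sub>j\<close> with \<open>j \<le> x\<close>.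
  As \<open>P\<close> is a shortest path, a detour from \<open>v\<^sub>j\<close> to \<open>v\<^sub>l\<close> has at least \<open>l - j\<close> edges, so for
  the edge \<open>(v\<^sub>i, v\<^sub>i\<^sub>+\<^sub>1)\<close> only \<open>l \<le> i + \<zeta>\<close> matters. In the second phase the suffix minima
  of these values are pipelined backwards along \<open>P\<close>, one threshold per vertex and round,
  so that \<open>v\<^sub>i\<close> holds the minimum over \<open>i < l \<le> i + \<zeta>\<close> after \<open>\<zeta>\<close> more rounds. All values
  sent are at most \<open>3 n\<close>, i.e. messages have \<open>O(log n)\<close> bits.\<close>

lemma Least_nth_eq_index: "distinct xs \<Longrightarrow> l < length xs \<Longrightarrow> (LEAST i. xs ! i = xs ! l) = l"
  by (rule Least_equality) (auto simp: nth_eq_iff_index_eq dest: leI intro: ccontr)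

lemma enat_INF_attained:
  fixes f :: "'a \<Rightarrow> enat"
  assumes "(INF x\<in>A. f x) \<noteq> \<infinity>"
  obtains x where "x \<in> A" "(INF x\<in>A. f x) = f x"
proof -
  from assms obtain x where "x \<in> A" by (cases "A = {}") (auto simp: top_enat_def[symmetric])
  then have "(INF x\<in>A. f x) \<in> f ` A" by (intro wellorder_InfI) blast
  then show ?thesis using that by blast
qed

lemma INF_if_top:
  fixes f :: "'b \<Rightarrow> 'a::complete_lattice"
  shows "(INF u. if P u then f u else top) = (INF u\<in>{u. P u}. f u)"
proof (rule antisym)
  show "(INF u. if P u then f u else top) \<le> (INF u\<in>{u. P u}. f u)"
  proof (rule INF_greatest)
    fix u assume "u \<in> {u. P u}"
    then show "(INF u. if P u then f u else top) \<le> f u" by (intro INF_lower2[of u]) auto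
  qed
  show "(INF u\<in>{u. P u}. f u) \<le> (INF u. if P u then f u else top)"
    by (rule INF_greatest) (auto intro: INF_lower)
qed

section \<open>Walks and shortest paths\<close>

lemma is_walk_iff_successively:
  "is_walk E xs \<longleftrightarrow> xs \<noteq> [] \<and> successively (\<lambda>a b. (a, b) \<in> E) xs"
  unfolding is_walk_def successively_conv_nth by auto

lemma is_walk_snoc:
  "ys \<noteq> [] \<Longrightarrow> is_walk E (ys @ [v]) \<longleftrightarrow> is_walk E ys \<and> (last ys, v) \<in> E"
  by (auto simp: is_walk_iff_successively successively_append_iff)

lemma is_walk_mono: "is_walk E xs \<Longrightarrow> E \<subseteq> F \<Longrightarrow> is_walk F xs"
  unfolding is_walk_def by blast

lemma walk_edges_subset: "is_walk E xs \<Longrightarrow> walk_edges xs \<subseteq> E"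
  unfolding is_walk_def walk_edges_def by blast

lemma walk_append_tl:
  assumes "is_walk E xs" "is_walk E ys" "last xs = hd ys"
  shows "is_walk E (xs @ tl ys)" "hd (xs @ tl ys) = hd xs" "last (xs @ tl ys) = last ys"
    "length (xs @ tl ys) = length xs + length ys - 1"
proof -
  obtain y ys' where ys: "ys = y # ys'" and "xs \<noteq> []"
    using assms(1,2) by (cases ys) (auto simp: is_walk_def)
  then show "is_walk E (xs @ tl ys)" "hd (xs @ tl ys) = hd xs"
    "length (xs @ tl ys) = length xs + length ys - 1"
    using assms by (auto simp: is_walk_iff_successively successively_append_iff successively_Cons)
  show "last (xs @ tl ys) = last ys"
    using ys assms(3) \<open>xs \<noteq> []\<close> by (cases ys') auto
qed

lemma walk_take:
  assumes "is_walk E xs" "j < length xs"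
  shows "is_walk E (take (Suc j) xs)" "hd (take (Suc j) xs) = hd xs" "last (take (Suc j) xs) = xs ! j"
  using assms by (auto simp: is_walk_def) (simp add: take_Suc_conv_app_nth)

lemma walk_drop:
  assumes "is_walk E xs" "j < length xs"
  shows "is_walk E (drop j xs)" "hd (drop j xs) = xs ! j" "last (drop j xs) = last xs"
  using assms by (auto simp: is_walk_def last_conv_nth hd_drop_conv_nth)

lemma dist_le_walk_length: "is_walk E xs \<Longrightarrow> dist E (hd xs) (last xs) \<le> enat (length xs - 1)"
  unfolding dist_def by (rule INF_lower) auto

lemma walk_shortcut:
  assumes "is_walk E xs" "\<not> distinct xs"
  obtains ys where "is_walk E ys" "hd ys = hd xs" "last ys = last xs" "length ys < length xs"
proof -
  obtain a b c y where xs: "xs = a @ [y] @ b @ [y] @ c"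
    using not_distinct_decomp[OF assms(2)] by blast
  have "is_walk E (a @ [y] @ c)"
    using assms(1) unfolding xs
    by (auto simp: is_walk_iff_successively successively_append_iff successively_Cons)
  moreover have "hd (a @ [y] @ c) = hd xs" unfolding xs by (cases a) simp_all
  moreover have "last (a @ [y] @ c) = last xs" unfolding xs by (cases c) simp_all
  ultimately show ?thesis using that xs by simp
qed

lemma walk_to_path:
  assumes "is_walk E xs"
  obtains ys where "is_walk E ys" "distinct ys" "hd ys = hd xs" "last ys = last xs"
    "length ys \<le> length xs"
  using assms
proof (induction "length xs" arbitrary: xs rule: less_induct)
  case less
  show ?case
  proof (cases "distinct xs")
    case True
    then show ?thesis using less.prems by blast
  next
    case False
    then obtain ys where ys: "is_walk E ys" "hd ys = hd xs" "last ys = last xs" "length ys < length xs"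
      using walk_shortcut less.prems(2) by blast
    show ?thesis
      by (rule less.hyps[OF ys(4) _ ys(1)]) (use less.prems(1) ys in auto)
  qed
qed

lemma distinct_walk_length_le:
  assumes "digraph V E" "is_walk E xs" "distinct xs"
  shows "length xs \<le> card V + 1"
proof -
  have "set (tl xs) \<subseteq> V"
  proof
    fix v assume "v \<in> set (tl xs)"
    then obtain k where "k < length xs - 1" "v = xs ! Suc k"
      by (auto simp: in_set_conv_nth nth_tl)
    then have "(xs ! k, v) \<in> E" using assms(2) unfolding is_walk_def by blast
    then show "v \<in> V" using assms(1) unfolding digraph_def by blast
  qed
  then have "length (tl xs) \<le> card V"
    using assms(1,3) distinct_card[of "tl xs"] card_mono[of V "set (tl xs)"]
    unfolding digraph_def by (simp add: distinct_tl)
  then show ?thesis by simp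
qed

lemma shortest_path_length_le:
  assumes "shortest_path E ps" "is_walk E w" "hd w = hd ps" "last w = last ps"
  shows "length ps \<le> length w"
proof -
  have "enat (length ps - 1) \<le> enat (length w - 1)"
    using assms dist_le_walk_length[OF assms(2)] unfolding shortest_path_def by simp
  moreover have "w \<noteq> []" "ps \<noteq> []"
    using assms unfolding shortest_path_def is_walk_def by auto
  ultimately show ?thesis by (cases ps; cases w) auto
qed

lemma shortest_path_distinct:
  assumes "shortest_path E ps"
  shows "distinct ps"
proof (rule ccontr)
  assume "\<not> distinct ps"
  then obtain ys where "is_walk E ys" "hd ys = hd ps" "last ys = last ps" "length ys < length ps"
    using walk_shortcut assms unfolding shortest_path_def by blast
  then show False using shortest_path_length_le[OF assms] by fastforce
qed

lemma shortest_path_index_gap_le: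
  assumes sp: "shortest_path E ps" and w: "is_walk E w" "hd w = ps ! j" "last w = ps ! l"
    and "j \<le> l" "l < length ps"
  shows "l - j \<le> length w - 1"
proof -
  have ps: "is_walk E ps" using sp unfolding shortest_path_def by simp
  note pre = walk_take[OF ps, of j] and post = walk_drop[OF ps, of l]
  define w' where "w' = take (Suc j) ps @ tl w"
  have w': "is_walk E w'" "hd w' = hd ps" "last w' = ps ! l" "length w' = Suc j + length w - 1"
    using walk_append_tl[OF pre(1) w(1)] pre w assms(5,6) unfolding w'_def by auto
  define w'' where "w'' = w' @ tl (drop l ps)"
  have w'': "is_walk E w''" "hd w'' = hd ps" "last w'' = last ps"
    "length w'' = length w' + (length ps - l) - 1"
    using walk_append_tl[OF w'(1) post(1)] w' post assms(6) unfolding w''_def by auto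
  have "length ps \<le> length w''" using shortest_path_length_le[OF sp w''(1-3)] .
  moreover have "w \<noteq> []" using w(1) unfolding is_walk_def by simp
  ultimately show ?thesis using w'(4) w''(4) assms(5,6) by (cases w) auto
qed

lemma shortest_path_dist_to_last:
  assumes sp: "shortest_path E ps" and l: "l < length ps"
  shows "dist E (ps ! l) (last ps) = enat (length ps - 1 - l)"
proof (rule antisym)
  have ps: "is_walk E ps" using sp unfolding shortest_path_def by simp
  show "dist E (ps ! l) (last ps) \<le> enat (length ps - 1 - l)"
    using dist_le_walk_length[OF walk_drop(1)[OF ps l]] walk_drop(2,3)[OF ps l] by simp
  show "enat (length ps - 1 - l) \<le> dist E (ps ! l) (last ps)"
    unfolding dist_def
  proof (rule INF_greatest)
    fix w assume "w \<in> {xs. is_walk E xs \<and> hd xs = ps ! l \<and> last xs = last ps}"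
    moreover have "last ps = ps ! (length ps - 1)" using l by (intro last_conv_nth) auto
    ultimately have "length ps - 1 - l \<le> length w - 1"
      using shortest_path_index_gap_le[OF sp, of w l "length ps - 1"] l by auto
    then show "enat (length ps - 1 - l) \<le> enat (length w - 1)" by simp
  qed
qed

section \<open>Detours avoiding the path\<close>

text \<open>Self-loops are dropped: detours are paths, so they never use one, and the
  communication network has none.\<close>

definition detour_edges :: "(nat \<times> nat) set \<Rightarrow> nat list \<Rightarrow> (nat \<times> nat) set" where
  "detour_edges E ps = {(a, b). (a, b) \<in> E \<and> (a, b) \<notin> walk_edges ps \<and> a \<noteq> b}"

definition detour_starts :: "(nat \<times> nat) set \<Rightarrow> nat list \<Rightarrow> nat \<Rightarrow> nat \<Rightarrow> nat set" where
  "detour_starts E ps r v = {j. j < length ps \<and>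
     (\<exists>xs. is_walk (detour_edges E ps) xs \<and> length xs = Suc r \<and> hd xs = ps ! j \<and> last xs = v)}"

definition min_detour_start :: "(nat \<times> nat) set \<Rightarrow> nat list \<Rightarrow> nat \<Rightarrow> nat \<Rightarrow> enat" where
  "min_detour_start E ps r v = (INF j \<in> detour_starts E ps r v. enat j)"

lemma is_walk_detour_edges_iff:
  assumes "distinct D"
  shows "is_walk (detour_edges E ps) D \<longleftrightarrow> is_walk E D \<and> walk_edges D \<inter> walk_edges ps = {}"
proof
  assume D: "is_walk (detour_edges E ps) D"
  show "is_walk E D \<and> walk_edges D \<inter> walk_edges ps = {}"
    using is_walk_mono[OF D] walk_edges_subset[OF D] unfolding detour_edges_def by blast
next
  assume D: "is_walk E D \<and> walk_edges D \<inter> walk_edges ps = {}"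
  have "D ! k \<noteq> D ! Suc k" if "k < length D - 1" for k
    using nth_eq_iff_index_eq[OF assms, of k "Suc k"] that by simp
  then show "is_walk (detour_edges E ps) D"
    using D unfolding is_walk_def detour_edges_def walk_edges_def by blast
qed

lemma detour_starts_0: "detour_starts E ps 0 v = {j. j < length ps \<and> ps ! j = v}"
proof -
  have "is_walk (detour_edges E ps) [v]" unfolding is_walk_def by simp
  moreover have "hd xs = last xs" if "length xs = Suc 0" for xs :: "nat list"
    using that by (cases xs) auto
  ultimately show ?thesis unfolding detour_starts_def by fastforce
qed

lemma detour_starts_Suc:
  "detour_starts E ps (Suc r) v = (\<Union>u\<in>{u. (u, v) \<in> detour_edges E ps}. detour_starts E ps r u)"
proof (intro set_eqI iffI)
  fix j assume "j \<in> detour_starts E ps (Suc r) v"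
  then obtain xs where xs: "j < length ps" "is_walk (detour_edges E ps) xs" "length xs = Suc (Suc r)"
      "hd xs = ps ! j" "last xs = v"
    unfolding detour_starts_def by blast
  have "xs \<noteq> []" using xs(3) by auto
  then obtain ys where ys: "xs = ys @ [v]"
    using xs(5) by (metis append_butlast_last_id)
  have ys_ne: "ys \<noteq> []" and "length ys = Suc r"
    using xs(3) ys by auto
  moreover have "hd ys = ps ! j"
    using xs(4) ys ys_ne by simp
  moreover have "is_walk (detour_edges E ps) ys" and last_ys: "(last ys, v) \<in> detour_edges E ps"
    using xs(2) is_walk_snoc[OF ys_ne] unfolding ys by auto
  ultimately have "j \<in> detour_starts E ps r (last ys)"
    unfolding detour_starts_def using xs(1) by (intro CollectI conjI exI[of _ ys]) auto
  then show "j \<in> (\<Union>u\<in>{u. (u, v) \<in> detour_edges E ps}. detour_starts E ps r u)"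
    using last_ys by blast
next
  fix j assume "j \<in> (\<Union>u\<in>{u. (u, v) \<in> detour_edges E ps}. detour_starts E ps r u)"
  then obtain u ys where ys: "(u, v) \<in> detour_edges E ps" "j < length ps"
      "is_walk (detour_edges E ps) ys" "length ys = Suc r" "hd ys = ps ! j" "last ys = u"
    unfolding detour_starts_def by blast
  then have "ys \<noteq> []" by auto
  then have "is_walk (detour_edges E ps) (ys @ [v])" "hd (ys @ [v]) = ps ! j"
    using is_walk_snoc ys by auto
  then show "j \<in> detour_starts E ps (Suc r) v"
    unfolding detour_starts_def using ys(2,4) by (intro CollectI conjI exI[of _ "ys @ [v]"]) auto
qed

lemma min_detour_start_Suc:
  "min_detour_start E ps (Suc r) v = (INF u\<in>{u. (u, v) \<in> detour_edges E ps}. min_detour_start E ps r u)"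
  unfolding min_detour_start_def detour_starts_Suc
  by (rule antisym) (auto intro!: INF_greatest intro: INF_lower2)

lemma min_detour_start_attained:
  assumes "min_detour_start E ps r v \<noteq> \<infinity>"
  obtains j where "j \<in> detour_starts E ps r v" "min_detour_start E ps r v = enat j"
proof -
  from enat_INF_attained[OF assms[unfolded min_detour_start_def]]
  obtain j where "j \<in> detour_starts E ps r v" "(INF j\<in>detour_starts E ps r v. enat j) = enat j" .
  then show ?thesis by (intro that) (simp_all add: min_detour_start_def)
qed

lemma detour_start_of_path:
  assumes "is_walk E D" "distinct D" "walk_edges D \<inter> walk_edges ps = {}"
    "hd D = ps ! j" "last D = v" "j < length ps"
  shows "j \<in> detour_starts E ps (length D - 1) v"
proof -
  have "is_walk (detour_edges E ps) D" using assms(1-3) is_walk_detour_edges_iff by blast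
  moreover have "length D = Suc (length D - 1)" using assms(1) by (simp add: is_walk_def)
  ultimately show ?thesis
    unfolding detour_starts_def using assms(4-6) by (intro CollectI conjI exI[of _ D]) auto
qed

lemma path_of_detour_start:
  assumes "j \<in> detour_starts E ps r v"
  obtains D where "is_walk E D" "distinct D" "walk_edges D \<inter> walk_edges ps = {}"
    "hd D = ps ! j" "last D = v" "length D \<le> Suc r"
proof -
  obtain xs where xs: "is_walk (detour_edges E ps) xs" "length xs = Suc r" "hd xs = ps ! j" "last xs = v"
    using assms unfolding detour_starts_def by blast
  from walk_to_path[OF xs(1)] obtain D where "is_walk (detour_edges E ps) D" "distinct D"
      "hd D = ps ! j" "last D = v" "length D \<le> Suc r"
    using xs by metis
  then show ?thesis using that is_walk_detour_edges_iff by blast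
qed

text \<open>Capping the detour length at \<open>n\<close> loses nothing, since detours are paths, and keeps
  every value below \<open>3 n\<close>.\<close>

definition detour_end_value :: "(nat \<times> nat) set \<Rightarrow> nat list \<Rightarrow> nat \<Rightarrow> nat \<Rightarrow> nat \<Rightarrow> nat \<Rightarrow> enat" where
  "detour_end_value E ps \<zeta> n l x = (INF r \<in> {..min \<zeta> n}.
     if min_detour_start E ps r (ps ! l) \<le> enat x
     then min_detour_start E ps r (ps ! l) + enat r + enat (length ps - 1 - l) else \<infinity>)"

text \<open>The cut-off \<open>l \<le> x + \<zeta>\<close> loses nothing, since a detour from \<open>v\<^sub>j\<close> to \<open>v\<^sub>l\<close> with
  \<open>j \<le> x\<close> has at least \<open>l - j\<close> edges; it is what lets the backward pipeline along \<open>P\<close>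
  deliver the minimum within \<open>\<zeta>\<close> rounds.\<close>

definition suffix_end_value :: "(nat \<times> nat) set \<Rightarrow> nat list \<Rightarrow> nat \<Rightarrow> nat \<Rightarrow> nat \<Rightarrow> nat \<Rightarrow> enat" where
  "suffix_end_value E ps \<zeta> n i x =
     (INF l \<in> {l. i \<le> l \<and> l \<le> x + \<zeta> \<and> l < length ps}. detour_end_value E ps \<zeta> n l x)"

lemma suffix_end_value_empty:
  "x + \<zeta> < i \<or> length ps \<le> i \<Longrightarrow> suffix_end_value E ps \<zeta> n i x = \<infinity>"
  unfolding suffix_end_value_def by (auto simp: top_enat_def[symmetric])

lemma suffix_end_value_step:
  assumes "i < length ps" "i \<le> x + \<zeta>"
  shows "suffix_end_value E ps \<zeta> n i x = min (detour_end_value E ps \<zeta> n i x) (suffix_end_value E ps \<zeta> n (Suc i) x)"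
proof -
  have "{l. i \<le> l \<and> l \<le> x + \<zeta> \<and> l < length ps} = insert i {l. Suc i \<le> l \<and> l \<le> x + \<zeta> \<and> l < length ps}"
    using assms by auto
  then show ?thesis unfolding suffix_end_value_def by (simp add: inf_min)
qed

locale shortest_path_graph =
  fixes V :: "nat set" and E :: "(nat \<times> nat) set" and ps :: "nat list"
  assumes digraph: "digraph V E" and shortest_path: "shortest_path E ps"
begin

lemma walk_ps: "is_walk E ps"
  using shortest_path unfolding shortest_path_def by simp

lemma distinct_ps: "distinct ps"
  using shortest_path_distinct[OF shortest_path] .

lemma length_ps_le: "length ps \<le> card V + 1"
  using distinct_walk_length_le[OF digraph walk_ps distinct_ps] .

lemma min_detour_start_0:
  "min_detour_start E ps 0 v = (if v \<in> set ps then enat (LEAST i. ps ! i = v) else \<infinity>)"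
proof (cases "v \<in> set ps")
  case True
  then obtain l where l: "l < length ps" "ps ! l = v" by (auto simp: in_set_conv_nth)
  then have "detour_starts E ps 0 v = {l}"
    unfolding detour_starts_0 using distinct_ps by (auto simp: nth_eq_iff_index_eq)
  then show ?thesis
    using True Least_nth_eq_index[OF distinct_ps l(1)] l by (simp add: min_detour_start_def)
next
  case False
  then have "detour_starts E ps 0 v = {}" unfolding detour_starts_0 by auto
  then show ?thesis using False by (simp add: min_detour_start_def top_enat_def)
qed

lemma suffix_end_value_le_rp_short:
  assumes "i < length ps - 1"
  shows "suffix_end_value E ps \<zeta> (card V) (Suc i) i \<le> rp_short E ps \<zeta> i"
  unfolding rp_short_def
proof (rule Inf_greatest, clarify)
  fix j l D
  assume jl: "j \<le> i" "i + 1 \<le> l" "l < length ps"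
    and D: "is_walk E D" "distinct D" "hd D = ps ! j" "last D = ps ! l" "length D - 1 \<le> \<zeta>"
      "walk_edges D \<inter> walk_edges ps = {}"
  define r where "r = length D - 1"
  have start: "min_detour_start E ps r (ps ! l) \<le> enat j"
    unfolding min_detour_start_def r_def
    by (rule INF_lower, rule detour_start_of_path) (use D jl in auto)
  have r: "r \<le> min \<zeta> (card V)"
    using distinct_walk_length_le[OF digraph D(1,2)] D(5) unfolding r_def by simp
  have "l - j \<le> r"
    using shortest_path_index_gap_le[OF shortest_path D(1,3,4)] jl unfolding r_def by simp
  then have "l \<le> i + \<zeta>" using jl(1,2) r by linarith
  then have "suffix_end_value E ps \<zeta> (card V) (Suc i) i \<le> detour_end_value E ps \<zeta> (card V) l i"
    unfolding suffix_end_value_def by (intro INF_lower) (use jl in auto)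
  also have "\<dots> \<le> min_detour_start E ps r (ps ! l) + enat r + enat (length ps - 1 - l)"
    unfolding detour_end_value_def
    using r order.trans[OF start] jl(1) by (intro INF_lower2[of r]) auto
  also have "\<dots> \<le> enat j + enat r + enat (length ps - 1 - l)"
    using start by (intro add_right_mono)
  also have "\<dots> = enat (j + (length D - 1) + (length ps - 1 - l))"
    unfolding r_def by simp
  finally show "suffix_end_value E ps \<zeta> (card V) (Suc i) i \<le> enat (j + (length D - 1) + (length ps - 1 - l))" .
qed

lemma rp_short_le_suffix_end_value:
  "rp_short E ps \<zeta> i \<le> suffix_end_value E ps \<zeta> (card V) (Suc i) i"
  unfolding suffix_end_value_def detour_end_value_def
proof (intro INF_greatest)
  fix l r
  assume l: "l \<in> {l. Suc i \<le> l \<and> l \<le> i + \<zeta> \<and> l < length ps}" and r: "r \<in> {..min \<zeta> (card V)}"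
  show "rp_short E ps \<zeta> i \<le> (if min_detour_start E ps r (ps ! l) \<le> enat i
      then min_detour_start E ps r (ps ! l) + enat r + enat (length ps - 1 - l) else \<infinity>)"
  proof (cases "min_detour_start E ps r (ps ! l) \<le> enat i")
    case True
    then have "min_detour_start E ps r (ps ! l) \<noteq> \<infinity>" by (metis enat_ord_simps(5) infinity_ileE)
    then obtain j where j: "j \<in> detour_starts E ps r (ps ! l)" "min_detour_start E ps r (ps ! l) = enat j"
      by (rule min_detour_start_attained)
    obtain D where D: "is_walk E D" "distinct D" "walk_edges D \<inter> walk_edges ps = {}"
        "hd D = ps ! j" "last D = ps ! l" "length D \<le> Suc r"
      using j(1) by (rule path_of_detour_start)
    have "j \<le> i" using True j(2) by simp
    have "rp_short E ps \<zeta> i \<le> enat (j + (length D - 1) + (length ps - 1 - l))"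
      unfolding rp_short_def
      by (rule Inf_lower, rule CollectI, intro exI[of _ j] exI[of _ l] exI[of _ D] conjI)
        (use \<open>j \<le> i\<close> l r D in auto)
    also have "\<dots> \<le> enat (j + r + (length ps - 1 - l))" using D(6) by simp
    finally show ?thesis using True j(2) by simp
  qed simp
qed

lemma rp_short_eq_suffix_end_value:
  "i < length ps - 1 \<Longrightarrow> rp_short E ps \<zeta> i = suffix_end_value E ps \<zeta> (card V) (Suc i) i"
  using suffix_end_value_le_rp_short rp_short_le_suffix_end_value by (rule antisym[rotated])

end

section \<open>Message encoding\<close>

definition encodable :: "nat \<Rightarrow> enat \<Rightarrow> bool" where
  "encodable n e \<longleftrightarrow> e = \<infinity> \<or> e < enat ((n + 2) ^ 2)"

lemma encodable_infinity [simp]: "encodable n \<infinity>"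
  unfolding encodable_def by simp

lemma encodable_enat: "a \<le> 3 * n \<Longrightarrow> encodable n (enat a)"
  unfolding encodable_def by (simp add: power2_eq_square algebra_simps)

lemma encodable_INF:
  assumes "\<And>x. x \<in> A \<Longrightarrow> encodable n (f x)"
  shows "encodable n (INF x\<in>A. f x)"
proof (cases "(INF x\<in>A. f x) = \<infinity>")
  case False
  then obtain x where "x \<in> A" "(INF x\<in>A. f x) = f x" by (rule enat_INF_attained)
  then show ?thesis using assms by simp
qed simp

fun decode :: "nat option \<Rightarrow> enat" where
  "decode None = \<infinity>"
| "decode (Some m) = enat m"

definition encode :: "nat \<Rightarrow> enat \<Rightarrow> nat option" where
  "encode n e = (if e < enat ((n + 2) ^ 2) then Some (the_enat e) else None)"

lemma decode_encode: "encodable n e \<Longrightarrow> decode (encode n e) = e"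
  unfolding encodable_def encode_def by (cases e) auto

lemma encode_bounded: "(case encode n e of None \<Rightarrow> True | Some m \<Rightarrow> m < (n + 2) ^ 2)"
  unfolding encode_def by (cases e) auto

context shortest_path_graph
begin

lemma min_detour_start_le_card:
  assumes "min_detour_start E ps r v = enat j"
  shows "j \<le> card V"
proof -
  obtain j' where "j' \<in> detour_starts E ps r v" "min_detour_start E ps r v = enat j'"
    using assms by (metis enat.distinct(1) min_detour_start_attained)
  then show ?thesis using assms length_ps_le unfolding detour_starts_def by auto
qed

lemma encodable_min_detour_start: "encodable (card V) (min_detour_start E ps r v)"
  by (cases "min_detour_start E ps r v") (auto intro!: encodable_enat dest: min_detour_start_le_card)

lemma encodable_suffix_end_value: "encodable (card V) (suffix_end_value E ps \<zeta> (card V) i x)"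
  unfolding suffix_end_value_def detour_end_value_def
proof (intro encodable_INF)
  fix l r assume r: "r \<in> {..min \<zeta> (card V)}"
  show "encodable (card V) (if min_detour_start E ps r (ps ! l) \<le> enat x
      then min_detour_start E ps r (ps ! l) + enat r + enat (length ps - 1 - l) else \<infinity>)"
  proof (cases "min_detour_start E ps r (ps ! l)")
    case (enat j)
    then show ?thesis
      using min_detour_start_le_card[OF enat] r length_ps_le by (auto intro!: encodable_enat)
  qed simp
qed

end

section \<open>The algorithm\<close>

lemma length_exec_view [simp]: "length (exec_view A V E ps \<zeta> r v) = r"
  by (induction r arbitrary: v) auto

lemma take_exec_view: "q \<le> r \<Longrightarrow> take q (exec_view A V E ps \<zeta> r v) = exec_view A V E ps \<zeta> q v"
proof (induction r)
  case (Suc r)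
  then show ?case by (cases "q = Suc r") auto
qed simp

definition min_received :: "(nat \<Rightarrow> nat option) \<Rightarrow> enat" where
  "min_received msgs = (INF u. decode (msgs u))"

definition from_successor :: "local_input \<Rightarrow> (nat \<Rightarrow> nat option) \<Rightarrow> enat" where
  "from_successor li msgs = (INF u \<in> li_P_out li. decode (msgs u))"

definition bfs_state :: "local_input \<Rightarrow> view \<Rightarrow> enat" where
  "bfs_state li vw = (if vw = [] then (case li_index li of Some j \<Rightarrow> enat j | None \<Rightarrow> \<infinity>)
     else min_received (last vw))"

definition dist_to_target :: "local_input \<Rightarrow> enat" where
  "dist_to_target li = (case li_dist_t li of Some d \<Rightarrow> d | None \<Rightarrow> \<infinity>)"

text \<open>\<open>take r vw\<close> is the view after round \<open>r\<close>, so a vertex can still read off its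
  breadth-first state of every earlier round.\<close>

definition local_end_value :: "local_input \<Rightarrow> view \<Rightarrow> nat \<Rightarrow> enat" where
  "local_end_value li vw x = (INF r \<in> {..min (li_zeta li) (li_n li)}.
     if bfs_state li (take r vw) \<le> enat x
     then bfs_state li (take r vw) + enat r + dist_to_target li else \<infinity>)"

text \<open>After \<open>\<zeta> + k\<close> rounds, \<open>v\<^sub>i\<close> works on the threshold \<open>x = i + k - \<zeta>\<close>, which is also the
  threshold of its predecessor on \<open>P\<close> one round later.\<close>

definition pipeline_value :: "local_input \<Rightarrow> view \<Rightarrow> enat" where
  "pipeline_value li vw = (case li_index li of
      None \<Rightarrow> \<infinity>
    | Some i \<Rightarrow> (let \<zeta> = li_zeta li; k = length vw - \<zeta> in
        if \<zeta> \<le> i + k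
        then min (local_end_value li vw (i + k - \<zeta>)) (if k = 0 then \<infinity> else from_successor li (last vw))
        else \<infinity>))"

definition rp_send :: "local_input \<Rightarrow> view \<Rightarrow> nat \<Rightarrow> nat option" where
  "rp_send li vw u = encode (li_n li)
     (if length vw < li_zeta li
      then (if u \<in> li_out li \<and> u \<notin> li_P_out li then bfs_state li vw else \<infinity>)
      else if length vw < 2 * li_zeta li
      then (if u \<in> li_P_in li then pipeline_value li vw else \<infinity>)
      else \<infinity>)"

definition rp_output :: "local_input \<Rightarrow> view \<Rightarrow> enat" where
  "rp_output li vw = from_successor li (last vw)"

definition rp_alg :: congest_alg where
  "rp_alg = (rp_send, rp_output)"

lemma rp_alg_simps [simp]: "fst rp_alg = rp_send" "snd rp_alg = rp_output"
  unfolding rp_alg_def by simp_all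

lemma rp_alg_bandwidth: "bandwidth_ok 2 rp_alg V E ps \<zeta> T"
proof -
  have "li_n (node_input V E ps \<zeta> v) = card V" for v by (simp add: node_input_def)
  then show ?thesis unfolding bandwidth_ok_def rp_alg_simps rp_send_def by (simp add: encode_bounded)
qed

section \<open>Correctness of the algorithm\<close>

context shortest_path_graph
begin

abbreviation input_of :: "nat \<Rightarrow> nat \<Rightarrow> local_input" where
  "input_of \<zeta> v \<equiv> node_input V E ps \<zeta> v"

abbreviation local_view :: "nat \<Rightarrow> nat \<Rightarrow> nat \<Rightarrow> view" where
  "local_view \<zeta> r v \<equiv> exec_view rp_alg V E ps \<zeta> r v"

lemma input_of_simps:
  "li_zeta (input_of \<zeta> v) = \<zeta>" "li_n (input_of \<zeta> v) = card V"
  "li_out (input_of \<zeta> v) = {u. (v, u) \<in> E}"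
  "li_P_out (input_of \<zeta> v) = {u. (v, u) \<in> walk_edges ps}"
  "li_P_in (input_of \<zeta> v) = {u. (u, v) \<in> walk_edges ps}"
  unfolding node_input_def by simp_all

lemma last_local_view:
  "last (local_view \<zeta> (Suc q) v)
    = (\<lambda>u. if u \<in> nbrs E v then rp_send (input_of \<zeta> u) (local_view \<zeta> q u) v else None)"
  by (simp cong: if_cong)

lemma path_successors:
  "l < length ps \<Longrightarrow> {u. (ps ! l, u) \<in> walk_edges ps} = (if Suc l < length ps then {ps ! Suc l} else {})"
  using distinct_ps unfolding walk_edges_def by (auto simp: nth_eq_iff_index_eq)

lemma path_predecessors:
  "l < length ps \<Longrightarrow> {u. (u, ps ! l) \<in> walk_edges ps} = (if 0 < l then {ps ! (l - 1)} else {})"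
  using distinct_ps unfolding walk_edges_def by (auto simp: nth_eq_iff_index_eq)

lemma li_index_input_of: "l < length ps \<Longrightarrow> li_index (input_of \<zeta> (ps ! l)) = Some l"
  unfolding node_input_def using Least_nth_eq_index[OF distinct_ps] by simp

lemma dist_to_target_input_of:
  "l < length ps \<Longrightarrow> dist_to_target (input_of \<zeta> (ps ! l)) = enat (length ps - 1 - l)"
  unfolding node_input_def dist_to_target_def using shortest_path_dist_to_last[OF shortest_path] by simp

lemma bfs_state_local_view:
  "q \<le> \<zeta> \<Longrightarrow> bfs_state (input_of \<zeta> v) (local_view \<zeta> q v) = min_detour_start E ps q v"
proof (induction q arbitrary: v)
  case 0
  then show ?case by (simp add: bfs_state_def node_input_def min_detour_start_0)
next
  case (Suc q)
  have received: "decode (if u \<in> nbrs E v then rp_send (input_of \<zeta> u) (local_view \<zeta> q u) v else None)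
      = (if (u, v) \<in> detour_edges E ps then min_detour_start E ps q u else top)" for u
  proof (cases "u \<in> nbrs E v")
    case True
    then have "rp_send (input_of \<zeta> u) (local_view \<zeta> q u) v =
        encode (card V) (if (u, v) \<in> detour_edges E ps then min_detour_start E ps q u else \<infinity>)"
      using Suc by (auto simp: rp_send_def input_of_simps detour_edges_def nbrs_def)
    then show ?thesis
      using True decode_encode encodable_min_detour_start by (auto simp: top_enat_def)
  next
    case False
    then show ?thesis by (auto simp: detour_edges_def nbrs_def top_enat_def)
  qed
  have "bfs_state (input_of \<zeta> v) (local_view \<zeta> (Suc q) v)
      = (INF u. decode (if u \<in> nbrs E v then rp_send (input_of \<zeta> u) (local_view \<zeta> q u) v else None))"
    unfolding bfs_state_def min_received_def last_local_view by simp
  also have "\<dots> = (INF u. if (u, v) \<in> detour_edges E ps then min_detour_start E ps q u else top)"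
    by (simp only: received)
  also have "\<dots> = min_detour_start E ps (Suc q) v"
    unfolding INF_if_top min_detour_start_Suc ..
  finally show ?case .
qed

lemma local_end_value_local_view:
  assumes "l < length ps"
  shows "local_end_value (input_of \<zeta> (ps ! l)) (local_view \<zeta> (\<zeta> + k) (ps ! l)) x
    = detour_end_value E ps \<zeta> (card V) l x"
  unfolding local_end_value_def detour_end_value_def input_of_simps
  using assms by (intro INF_cong refl) (simp add: take_exec_view bfs_state_local_view dist_to_target_input_of)

lemma from_successor_local_view:
  assumes "Suc i < length ps"
  shows "from_successor (input_of \<zeta> (ps ! i)) (last (local_view \<zeta> (Suc q) (ps ! i)))
    = decode (rp_send (input_of \<zeta> (ps ! Suc i)) (local_view \<zeta> q (ps ! Suc i)) (ps ! i))"
proof -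
  have "(ps ! i, ps ! Suc i) \<in> E" using walk_ps assms unfolding is_walk_def by auto
  moreover have "ps ! i \<noteq> ps ! Suc i" using distinct_ps assms by (simp add: nth_eq_iff_index_eq)
  ultimately have "ps ! Suc i \<in> nbrs E (ps ! i)" unfolding nbrs_def by auto
  then show ?thesis
    using assms path_successors[of i] by (simp add: from_successor_def input_of_simps last_local_view)
qed

lemma from_successor_last: "Suc i = length ps \<Longrightarrow> from_successor (input_of \<zeta> (ps ! i)) msgs = \<infinity>"
  using path_successors[of i] by (simp add: from_successor_def input_of_simps top_enat_def)

lemma rp_send_predecessor:
  assumes "Suc i < length ps" "\<zeta> \<le> q" "q < 2 * \<zeta>"
  shows "rp_send (input_of \<zeta> (ps ! Suc i)) (local_view \<zeta> q (ps ! Suc i)) (ps ! i)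
    = encode (card V) (pipeline_value (input_of \<zeta> (ps ! Suc i)) (local_view \<zeta> q (ps ! Suc i)))"
  using assms path_predecessors[of "Suc i"] by (simp add: rp_send_def input_of_simps)

lemma pipeline_value_local_view:
  assumes "i < length ps" "k < \<zeta>"
  shows "pipeline_value (input_of \<zeta> (ps ! i)) (local_view \<zeta> (\<zeta> + k) (ps ! i))
    = (if \<zeta> \<le> i + k then suffix_end_value E ps \<zeta> (card V) i (i + k - \<zeta>) else \<infinity>)"
  using assms
proof (induction k arbitrary: i)
  case 0
  then have "\<zeta> \<le> i \<Longrightarrow> suffix_end_value E ps \<zeta> (card V) (Suc i) (i - \<zeta>) = \<infinity>"
    by (intro suffix_end_value_empty) simp
  then show ?case
    using 0 suffix_end_value_step[where i=i and x="i - \<zeta>" and n="card V"]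
    by (simp add: pipeline_value_def li_index_input_of input_of_simps
        local_end_value_local_view[where k=0, simplified])
next
  case (Suc k)
  let ?x = "i + Suc k - \<zeta>"
  have received: "from_successor (input_of \<zeta> (ps ! i)) (last (local_view \<zeta> (\<zeta> + Suc k) (ps ! i)))
      = (if \<zeta> \<le> i + Suc k then suffix_end_value E ps \<zeta> (card V) (Suc i) ?x else \<infinity>)"
  proof (cases "Suc i < length ps")
    case True
    have "from_successor (input_of \<zeta> (ps ! i)) (last (local_view \<zeta> (Suc (\<zeta> + k)) (ps ! i)))
        = decode (encode (card V) (pipeline_value (input_of \<zeta> (ps ! Suc i)) (local_view \<zeta> (\<zeta> + k) (ps ! Suc i))))"
      unfolding from_successor_local_view[OF True] using rp_send_predecessor[OF True] Suc.prems(2) by simp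
    also have "\<dots> = (if \<zeta> \<le> Suc i + k then suffix_end_value E ps \<zeta> (card V) (Suc i) (Suc i + k - \<zeta>) else \<infinity>)"
      using Suc.IH[OF True] Suc.prems(2) decode_encode encodable_suffix_end_value by simp
    finally show ?thesis by simp
  next
    case False
    then show ?thesis using Suc.prems from_successor_last suffix_end_value_empty by simp
  qed
  show ?case
    using Suc.prems received suffix_end_value_step[where i=i and x="?x" and n="card V"]
    by (simp add: pipeline_value_def li_index_input_of input_of_simps
        local_end_value_local_view[where k="Suc k", simplified])
qed

lemma rp_output_correct:
  assumes "1 \<le> \<zeta>" "i < length ps - 1"
  shows "rp_output (input_of \<zeta> (ps ! i)) (local_view \<zeta> (2 * \<zeta>) (ps ! i)) = rp_short E ps \<zeta> i"
proof -
  have i: "Suc i < length ps" using assms(2) by simp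
  have rounds: "2 * \<zeta> = Suc (\<zeta> + (\<zeta> - 1))" using assms(1) by simp
  have "rp_output (input_of \<zeta> (ps ! i)) (local_view \<zeta> (2 * \<zeta>) (ps ! i))
      = decode (rp_send (input_of \<zeta> (ps ! Suc i)) (local_view \<zeta> (\<zeta> + (\<zeta> - 1)) (ps ! Suc i)) (ps ! i))"
    unfolding rp_output_def rounds by (rule from_successor_local_view[OF i])
  also have "\<dots> = pipeline_value (input_of \<zeta> (ps ! Suc i)) (local_view \<zeta> (\<zeta> + (\<zeta> - 1)) (ps ! Suc i))"
    using rp_send_predecessor[OF i] pipeline_value_local_view[OF i, of "\<zeta> - 1"] assms(1)
      decode_encode encodable_suffix_end_value by simp
  also have "\<dots> = suffix_end_value E ps \<zeta> (card V) (Suc i) i"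
    using pipeline_value_local_view[OF i, of "\<zeta> - 1"] assms(1) by simp
  also have "\<dots> = rp_short E ps \<zeta> i"
    using rp_short_eq_suffix_end_value[OF assms(2)] ..
  finally show ?thesis .
qed

end

theorem proposition4p1:
  shows "\<forall>k. \<exists>C c (A :: congest_alg). \<forall>V E ps \<zeta>.
     digraph V E \<and> (\<forall>v \<in> V. v < (card V + 1) ^ k) \<and>
     shortest_path E ps \<and> \<zeta> \<ge> 1
     \<longrightarrow> bandwidth_ok c A V E ps \<zeta> (C * \<zeta>) \<and>
         (\<forall>i < length ps - 1. output_after A V E ps \<zeta> (C * \<zeta>) (ps ! i) = rp_short E ps \<zeta> i)"
proof (intro allI exI[of _ 2] exI[of _ rp_alg] impI)
  fix k \<zeta> :: nat and V E ps
  assume "digraph V E \<and> (\<forall>v \<in> V. v < (card V + 1) ^ k) \<and> shortest_path E ps \<and> 1 \<le> \<zeta>"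
  then have "shortest_path_graph V E ps" and "1 \<le> \<zeta>"
    by (simp_all add: shortest_path_graph_def)
  then show "bandwidth_ok 2 rp_alg V E ps \<zeta> (2 * \<zeta>) \<and>
      (\<forall>i < length ps - 1. output_after rp_alg V E ps \<zeta> (2 * \<zeta>) (ps ! i) = rp_short E ps \<zeta> i)"
    using rp_alg_bandwidth shortest_path_graph.rp_output_correct
    by (simp add: output_after_def)
qed

end
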